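(* Let $\hat k\in K$, $\hat j\in M\cup\{0\}$, and let $\bar{\boldsymbol{\pi}}$ be an extreme point of $\mathcal{C}_{(\hat k,\hat j)}=\{\boldsymbol{\pi}\in\mathcal{C}:\alpha^{\hat j}_{\hat k}=1\}$. For $j\in M\cup\{0\}$ define $\mathcal{K}^j=\{k\in K:\bar\alpha^j_k>0\}\setminus\{\hat k\}$ if $j=\hat j$ and $\mathcal{K}^j=\{k\in K:\bar\alpha^j_k>0\}$ otherwise, and $\mathcal{T}^j=\{t\in T:\bar\beta^j_t>0\}$. Write $\Phi_{i,j}=\Phi_{i,j}(\bar{\boldsymbol{\pi}})$, $\Psi_j=\Psi_j(\bar{\boldsymbol{\pi}})$. Then: (a) $\bigcap_{j=0}^m\mathcal{T}^j=\emptyset$; (b) for each $i\in N$, $\bar\gamma^0_i=\max_{j\in M}(\Phi_{i,j})^+$, and $\bar\gamma^j_i=\bar\gamma^0_i-\Phi_{i,j}$ for all $j\in M$; (c) $\bar\theta_0=\max_{j\in M}(\Psi_j)^+$, and $\bar\theta_j=\bar\theta_0-\Psi_j$ for all $j\in M$; (d) there exist $U_1\subseteq\{(i,j)\in N\times M:\Phi_{i,j}=0\}$ and $U_2\subseteq\{j\in M:\Psi_j=0\}$ such that $$|U_1|+|U_2|\ \ge\ \sum_{j=0}^m\big(|\mathcal{K}^j|+|\mathcal{T}^j|\big)+\sum_{i=1}^n\mathbb{I}(\bar\gamma^0_i)-\sum_{i=1}^n\sum_{j=1}^m\mathbb{I}(\bar\gamma^0_i)\big(1-\mathbb{I}(\bar\gamma^j_i)\big)+\mathbb{I}(\bar\theta_0)-\sum_{j=1}^m\mathbb{I}(\bar\theta_0)\big(1-\mathbb{I}(\bar\theta_j)\big).$$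 Conversely, if $\bar{\boldsymbol{\pi}}$ has nonnegative $\bar{\boldsymbol{\alpha}}^j,\bar{\boldsymbol{\beta}}^j$ components, $\bar\alpha^{\hat j}_{\hat k}=1$, and its $\bar{\boldsymbol{\gamma}},\bar{\boldsymbol{\theta}}$ components are given by the formulas in (b) and (c), then $\bar{\boldsymbol{\pi}}\in\mathcal{C}_{(\hat k,\hat j)}$.
   Context: Let $N=\{1,\dots,n\}$, $M=\{1,\dots,m\}$, $K=\{1,\dots,\kappa\}$, $T=\{1,\dots,\tau\}$, with data $A^k\in\mathbb{R}^{m\times n}$ (entries $A^k_{j,i}$), $\mathbf{b}^k\in\mathbb{R}^n$, $\mathbf{c}^k\in\mathbb{R}^m$ (entries $c^k_j$), $d_k\in\mathbb{R}$ ($k\in K$), $E\in\mathbb{R}^{\tau\times n}$, $\mathbf{f}\in\mathbb{R}^\tau$. Vectors $\boldsymbol{\pi}=(\boldsymbol{\alpha}^0,\dots,\boldsymbol{\alpha}^m;\boldsymbol{\beta}^0,\dots,\boldsymbol{\beta}^m;\boldsymbol{\gamma}^0,\dots,\boldsymbol{\gamma}^m;\theta_0,\dots,\theta_m)\in\mathbb{R}^{(m+1)(\kappa+\tau+n+1)}$ with $\boldsymbol{\alpha}^j\in\mathbb{R}^\kappa$, $\boldsymbol{\beta}^j\in\mathbb{R}^\tau$, $\boldsymbol{\gamma}^j\in\mathbb{R}^n$, $\theta_j\in\mathbb{R}$. Define $\Phi_{i,j}(\boldsymbol{\pi})=\sum_{k=1}^\kappa\big((A^k_{j,i}+b^k_i)\alpha^j_k-b^k_i\alpha^0_k\big)+\sum_{t=1}^\tau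 E_{t,i}(\beta^j_t-\beta^0_t)$ for $i\in N,j\in M$, and $\Psi_j(\boldsymbol{\pi})=\sum_{k=1}^\kappa\big((c^k_j-d_k)\alpha^j_k+d_k\alpha^0_k\big)+\sum_{t=1}^\tau f_t(\beta^0_t-\beta^j_t)$ for $j\in M$. $\mathcal{C}$ is the set of all $\boldsymbol{\pi}\ge\mathbf{0}$ with $\Phi_{i,j}(\boldsymbol{\pi})+\gamma^j_i-\gamma^0_i=0$ for all $i\in N,j\in M$ and $\Psi_j(\boldsymbol{\pi})+\theta_j-\theta_0=0$ for all $j\in M$. $(a)^+=\max\{a,0\}$; $\mathbb{I}(a)=0$ if $a=0$ and $\mathbb{I}(a)=1$ otherwise. *)

theory Defs
  imports "HOL-Analysis.Analysis"
begin

text \<open>A vector pi = (alpha^0..alpha^m; beta^0..beta^m; gamma^0..gamma^m; theta_0..theta_m).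
  alpha j k = alpha^j_k (j in 0..m, k in 1..kappa), beta j t = beta^j_t (t in 1..tau),
  gamma j i = gamma^j_i (i in 1..n), theta j = theta_j.  Components outside these index
  ranges are required to be 0 (predicate pi_wf), so that the set of well-formed records is
  a faithful copy of R^((m+1)(kappa+tau+n+1)).\<close>

record pivec =
  alpha :: "nat \<Rightarrow> nat \<Rightarrow> real"
  beta  :: "nat \<Rightarrow> nat \<Rightarrow> real"
  gamma :: "nat \<Rightarrow> nat \<Rightarrow> real"
  theta :: "nat \<Rightarrow> real"

definition pi_wf :: "nat \<Rightarrow> nat \<Rightarrow> nat \<Rightarrow> nat \<Rightarrow> pivec \<Rightarrow> bool" where
  "pi_wf m n \<kappa> \<tau> p \<longleftrightarrow>
     (\<forall>j k. \<not> (j \<le> m \<and> k \<in> {1..\<kappa>}) \<longrightarrow> alpha p j k = 0) \<and>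
     (\<forall>j t. \<not> (j \<le> m \<and> t \<in> {1..\<tau>}) \<longrightarrow> beta p j t = 0) \<and>
     (\<forall>j i. \<not> (j \<le> m \<and> i \<in> {1..n}) \<longrightarrow> gamma p j i = 0) \<and>
     (\<forall>j. \<not> j \<le> m \<longrightarrow> theta p j = 0)"

definition pcomb :: "real \<Rightarrow> pivec \<Rightarrow> pivec \<Rightarrow> pivec" where
  "pcomb l p q = \<lparr> alpha = (\<lambda>j k. l * alpha p j k + (1 - l) * alpha q j k),
                   beta  = (\<lambda>j t. l * beta p j t + (1 - l) * beta q j t),
                   gamma = (\<lambda>j i. l * gamma p j i + (1 - l) * gamma q j i),
                   theta = (\<lambda>j. l * theta p j + (1 - l) * theta q j) \<rparr>"

definition is_extreme :: "pivec \<Rightarrow> pivec set \<Rightarrow> bool" where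
  "is_extreme x S \<longleftrightarrow> x \<in> S \<and>
     \<not> (\<exists>p\<in>S. \<exists>q\<in>S. p \<noteq> q \<and> (\<exists>l. 0 < l \<and> l < 1 \<and> x = pcomb l p q))"

text \<open>Data: A k j i = A^k_{j,i}, b k i = b^k_i, c k j = c^k_j, d k = d_k, E t i = E_{t,i}, f t = f_t.\<close>

definition Phi :: "nat \<Rightarrow> nat \<Rightarrow> (nat \<Rightarrow> nat \<Rightarrow> nat \<Rightarrow> real) \<Rightarrow> (nat \<Rightarrow> nat \<Rightarrow> real)
    \<Rightarrow> (nat \<Rightarrow> nat \<Rightarrow> real) \<Rightarrow> nat \<Rightarrow> nat \<Rightarrow> pivec \<Rightarrow> real" where
  "Phi \<kappa> \<tau> A b E i j p =
     (\<Sum>k=1..\<kappa>. (A k j i + b k i) * alpha p j k - b k i * alpha p 0 k)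
     + (\<Sum>t=1..\<tau>. E t i * (beta p j t - beta p 0 t))"

definition Psi :: "nat \<Rightarrow> nat \<Rightarrow> (nat \<Rightarrow> nat \<Rightarrow> real) \<Rightarrow> (nat \<Rightarrow> real) \<Rightarrow> (nat \<Rightarrow> real)
    \<Rightarrow> nat \<Rightarrow> pivec \<Rightarrow> real" where
  "Psi \<kappa> \<tau> c d f j p =
     (\<Sum>k=1..\<kappa>. (c k j - d k) * alpha p j k + d k * alpha p 0 k)
     + (\<Sum>t=1..\<tau>. f t * (beta p 0 t - beta p j t))"

definition Cset :: "nat \<Rightarrow> nat \<Rightarrow> nat \<Rightarrow> nat \<Rightarrow> (nat \<Rightarrow> nat \<Rightarrow> nat \<Rightarrow> real)
    \<Rightarrow> (nat \<Rightarrow> nat \<Rightarrow> real) \<Rightarrow> (nat \<Rightarrow> nat \<Rightarrow> real) \<Rightarrow> (nat \<Rightarrow> real)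
    \<Rightarrow> (nat \<Rightarrow> nat \<Rightarrow> real) \<Rightarrow> (nat \<Rightarrow> real) \<Rightarrow> pivec set" where
  "Cset m n \<kappa> \<tau> A b c d E f = {p. pi_wf m n \<kappa> \<tau> p \<and>
     (\<forall>j\<le>m. (\<forall>k\<in>{1..\<kappa>}. 0 \<le> alpha p j k) \<and> (\<forall>t\<in>{1..\<tau>}. 0 \<le> beta p j t)
            \<and> (\<forall>i\<in>{1..n}. 0 \<le> gamma p j i) \<and> 0 \<le> theta p j) \<and>
     (\<forall>i\<in>{1..n}. \<forall>j\<in>{1..m}. Phi \<kappa> \<tau> A b E i j p + gamma p j i - gamma p 0 i = 0) \<and>
     (\<forall>j\<in>{1..m}. Psi \<kappa> \<tau> c d f j p + theta p j - theta p 0 = 0)}"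

definition pos :: "real \<Rightarrow> real" where "pos a = max a 0"

definition ind :: "real \<Rightarrow> int" where "ind a = (if a = 0 then 0 else 1)"

end

theory Submission
  imports Defs
begin

(* The set C is cut out by n m + m linear equations and sign constraints, and on the face
   alpha^jh_kh = 1 the free coordinates of a point are its positive entries other than the
   pinned alpha^jh_kh. If an extreme point pb had more free coordinates than there are
   equations, a nonzero solution of the homogeneous equations supported on them would move pb
   in both directions inside the face. Hence the free coordinates number at most n m + m, and
   counting, for each i, how many entries gamma^j_i vanish (and likewise for theta) gives (d).
   The same perturbation argument with explicit directions gives (a)-(c): Phi and Psi see beta
   only through beta^j - beta^0, and the equations see gamma and theta only through
   gamma^j - gamma^0 and theta_j - theta_0, so raising beta^j_t, gamma^j_i or theta_j by the
   same amount for all j (including 0) keeps every equation. Nonnegativity already forces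
   gamma^0_i >= max_j (Phi_ij)^+; if the inequality were strict, all gamma^j_i would be
   positive and that direction would be admissible. *)

definition linear_form :: "(('v \<Rightarrow> real) \<Rightarrow> real) \<Rightarrow> bool" where
  "linear_form L \<longleftrightarrow> (\<forall>x y a b. L (\<lambda>v. a * x v + b * y v) = a * L x + b * L y)"

lemma homogeneous_system_nontrivial_solution:
  fixes c :: "'r \<Rightarrow> 'v \<Rightarrow> real"
  assumes "finite R" "finite S" "card R < card S"
  shows "\<exists>x. (\<forall>v. v \<notin> S \<longrightarrow> x v = 0) \<and> (\<exists>v\<in>S. x v \<noteq> 0) \<and> (\<forall>r\<in>R. (\<Sum>v\<in>S. c r v * x v) = 0)"
  using assms
proof (induction R arbitrary: S c rule: finite_induct)
  case empty
  then obtain v where "v \<in> S" by fastforce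
  then show ?case
    by (intro exI[of _ "indicator {v}"]) (auto simp: indicator_def)
next
  case (insert r R)
  show ?case
  proof (cases "\<forall>v\<in>S. c r v = 0")
    case True
    have "card R < card S" using insert by simp
    then obtain x where "\<forall>v. v \<notin> S \<longrightarrow> x v = 0" "\<exists>v\<in>S. x v \<noteq> 0"
        "\<forall>r\<in>R. (\<Sum>v\<in>S. c r v * x v) = 0"
      using insert.IH[of S c] insert.prems(1) by blast
    with True show ?thesis by (intro exI[of _ x]) auto
  next
    case False
    then obtain v0 where v0: "v0 \<in> S" "c r v0 \<noteq> 0" by blast
    \<comment> \<open>Gaussian elimination: use row r to eliminate the unknown v0 from the other rows.\<close>
    define c' where "c' = (\<lambda>r' v. c r' v - c r' v0 * c r v / c r v0)"
    have "card R < card (S - {v0})" using insert v0 by simp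
    then obtain y where y: "\<forall>v. v \<notin> S - {v0} \<longrightarrow> y v = 0" "\<exists>v\<in>S - {v0}. y v \<noteq> 0"
        "\<forall>r'\<in>R. (\<Sum>v\<in>S - {v0}. c' r' v * y v) = 0"
      using insert.IH[of "S - {v0}" c'] insert.prems by blast
    define x where "x = y(v0 := - (\<Sum>v\<in>S - {v0}. c r v * y v) / c r v0)"
    have "(\<Sum>v\<in>S - {v0}. g v * x v) = (\<Sum>v\<in>S - {v0}. g v * y v)" for g
      by (rule sum.cong) (auto simp: x_def)
    then have split: "(\<Sum>v\<in>S. g v * x v) = g v0 * x v0 + (\<Sum>v\<in>S - {v0}. g v * y v)" for g
      using sum.remove[OF insert.prems(1) v0(1), of "\<lambda>v. g v * x v"] by simp
    have rows: "(\<Sum>v\<in>S. c r' v * x v) = 0" if "r' \<in> insert r R" for r'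
    proof (cases "r' = r")
      case True
      then show ?thesis using split[of "c r"] v0 by (simp add: x_def)
    next
      case False
      then have "0 = (\<Sum>v\<in>S - {v0}. c' r' v * y v)" using y(3) that by simp
      also have "\<dots> = (\<Sum>v\<in>S - {v0}. c r' v * y v) - c r' v0 / c r v0 * (\<Sum>v\<in>S - {v0}. c r v * y v)"
        by (simp add: c'_def sum_subtractf sum_distrib_left algebra_simps)
      also have "\<dots> = (\<Sum>v\<in>S. c r' v * x v)"
        using split[of "c r'"] by (simp add: x_def)
      finally show ?thesis by simp
    qed
    have "\<forall>v. v \<notin> S \<longrightarrow> x v = 0" "\<exists>v\<in>S. x v \<noteq> 0"
      using y(1,2) v0 by (auto simp: x_def)
    with rows show ?thesis by (intro exI[of _ x]) simp
  qed
qed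

lemma linear_form_expansion:
  assumes "linear_form L" "finite S" "\<forall>v. v \<notin> S \<longrightarrow> x v = 0"
  shows "L x = (\<Sum>v\<in>S. L (indicator {v}) * x v)"
  using assms(2,3)
proof (induction S arbitrary: x rule: finite_induct)
  case empty
  then have "x = (\<lambda>v. 0 * x v + 0 * x v)" by auto
  then have "L x = 0 * L x + 0 * L x" using assms(1) unfolding linear_form_def by metis
  then show ?case by simp
next
  case (insert w S)
  define x' where "x' = x(w := 0)"
  have "x = (\<lambda>v. x w * indicator {w} v + 1 * x' v)" by (auto simp: x'_def indicator_def)
  then have "L x = x w * L (indicator {w}) + 1 * L x'"
    using assms(1) unfolding linear_form_def by metis
  also have "L x' = (\<Sum>v\<in>S. L (indicator {v}) * x' v)"
    by (rule insert.IH) (use insert.prems in \<open>simp add: x'_def\<close>)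
  also have "\<dots> = (\<Sum>v\<in>S. L (indicator {v}) * x v)"
    using insert.hyps(2) by (auto simp: x'_def intro!: sum.cong)
  finally show ?case using insert.hyps by (simp add: algebra_simps)
qed

lemma linear_forms_common_nontrivial_zero:
  assumes "finite R" "finite S" "card R < card S" "\<forall>r\<in>R. linear_form (L r)"
  shows "\<exists>x. (\<forall>v. v \<notin> S \<longrightarrow> x v = 0) \<and> (\<exists>v\<in>S. x v \<noteq> 0) \<and> (\<forall>r\<in>R. L r x = 0)"
proof -
  obtain x where x: "\<forall>v. v \<notin> S \<longrightarrow> x v = 0" "\<exists>v\<in>S. x v \<noteq> 0"
      "\<forall>r\<in>R. (\<Sum>v\<in>S. L r (indicator {v}) * x v) = 0"
    using homogeneous_system_nontrivial_solution[OF assms(1-3), of "\<lambda>r v. L r (indicator {v})"]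
    by blast
  have "L r x = 0" if "r \<in> R" for r
  proof -
    have "L r x = (\<Sum>v\<in>S. L r (indicator {v}) * x v)"
      using assms(4) that by (intro linear_form_expansion[OF _ assms(2) x(1)]) blast
    with x(3) that show ?thesis by simp
  qed
  with x(1,2) show ?thesis by blast
qed

lemma ind_eq_of_bool: "ind a = of_bool (a \<noteq> 0)"
  by (simp add: ind_def)

lemma int_card_filter: "finite A \<Longrightarrow> int (card {x \<in> A. Q x}) = (\<Sum>x\<in>A. of_bool (Q x))"
  by (simp add: Collect_conj_eq Int_commute)

lemma Max_pos_bounds:
  fixes P :: "'a \<Rightarrow> real"
  assumes "finite J" "J \<noteq> {}"
  shows Max_pos_nonneg: "0 \<le> Max ((\<lambda>j. pos (P j)) ` J)"
    and Max_pos_upper: "j \<in> J \<Longrightarrow> P j \<le> Max ((\<lambda>j. pos (P j)) ` J)"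
proof -
  have *: "pos (P j) \<le> Max ((\<lambda>j. pos (P j)) ` J)" if "j \<in> J" for j
    using assms that by (intro Max_ge) auto
  from assms(2) obtain j0 where "j0 \<in> J" by blast
  from *[OF this] show "0 \<le> Max ((\<lambda>j. pos (P j)) ` J)" by (simp add: pos_def)
  show "P j \<le> Max ((\<lambda>j. pos (P j)) ` J)" if "j \<in> J"
    using *[OF that] by (simp add: pos_def)
qed

lemma slack_eq_Max_pos_or_all_pos:
  fixes g P :: "nat \<Rightarrow> real"
  assumes "1 \<le> m" "\<forall>j\<le>m. 0 \<le> g j" "\<forall>j\<in>{1..m}. g j = g 0 - P j"
  shows "g 0 = Max ((\<lambda>j. pos (P j)) ` {1..m}) \<or> (\<forall>j\<le>m. 0 < g j)"
proof -
  let ?M = "Max ((\<lambda>j. pos (P j)) ` {1..m})"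
  have "?M \<le> g 0"
    using assms by (subst Max_le_iff) (auto simp: pos_def)
  moreover have "0 < g j" if "?M < g 0" "j \<le> m" for j
  proof (cases "j = 0")
    case True
    have "0 \<le> ?M" using assms(1) by (intro Max_pos_nonneg) auto
    with that(1) have "0 < g 0" by linarith
    with True show ?thesis by simp
  next
    case False
    with that(2) have j: "j \<in> {1..m}" by simp
    have "P j \<le> ?M" using j by (intro Max_pos_upper) auto
    with that(1) have "P j < g 0" by linarith
    with assms(3) j show ?thesis by simp
  qed
  ultimately show ?thesis by fastforce
qed

lemma nonneg_if_eq_Max_pos:
  fixes g P :: "nat \<Rightarrow> real"
  assumes "1 \<le> m" "g 0 = Max ((\<lambda>j. pos (P j)) ` {1..m})" "\<forall>j\<in>{1..m}. g j = g 0 - P j"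
    and "j \<le> m"
  shows "0 \<le> g j"
  using assms Max_pos_nonneg[of "{1..m}" P] Max_pos_upper[of "{1..m}" j P]
  by (cases "j = 0") auto

lemma card_nonzero_add_card_tight:
  fixes g P :: "nat \<Rightarrow> real"
  assumes "\<forall>j\<in>{1..m}. g j = g 0 - P j"
  shows "int (card {j\<in>{0..m}. g j \<noteq> 0}) + int (card {j\<in>{1..m}. g 0 = 0 \<and> P j = 0})
       = int m + ind (g 0) - (\<Sum>j=1..m. ind (g 0) * (1 - ind (g j)))"
proof -
  have "int (card {j\<in>{0..m}. g j \<noteq> 0}) = (\<Sum>j=0..m. of_bool (g j \<noteq> 0))"
    by (rule int_card_filter) simp
  also have "\<dots> = (\<Sum>j=0..m. ind (g j))"
    by (simp only: ind_eq_of_bool)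
  also have "\<dots> = ind (g 0) + (\<Sum>j=1..m. ind (g j))"
    by (simp add: sum.atLeast_Suc_atMost)
  finally have nonzero: "int (card {j\<in>{0..m}. g j \<noteq> 0}) = ind (g 0) + (\<Sum>j=1..m. ind (g j))" .
  have "int (card {j\<in>{1..m}. g 0 = 0 \<and> P j = 0}) = (\<Sum>j=1..m. of_bool (g 0 = 0 \<and> P j = 0))"
    by (rule int_card_filter) simp
  also have "\<dots> = (\<Sum>j=1..m. (1 - ind (g 0)) * (1 - ind (g j)))"
    using assms by (intro sum.cong) (auto simp: ind_def)
  finally have tight: "int (card {j\<in>{1..m}. g 0 = 0 \<and> P j = 0})
      = (\<Sum>j=1..m. (1 - ind (g 0)) * (1 - ind (g j)))" .
  show ?thesis
    unfolding nonzero tight by (simp add: algebra_simps sum.distrib sum_subtractf flip: sum_distrib_left)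
qed

datatype coord = Alpha_idx nat nat | Beta_idx nat nat | Gamma_idx nat nat | Theta_idx nat

fun coords :: "pivec \<Rightarrow> coord \<Rightarrow> real" where
  "coords p (Alpha_idx j k) = alpha p j k"
| "coords p (Beta_idx j t) = beta p j t"
| "coords p (Gamma_idx j i) = gamma p j i"
| "coords p (Theta_idx j) = theta p j"

definition of_coords :: "(coord \<Rightarrow> real) \<Rightarrow> pivec" where
  "of_coords x = \<lparr>alpha = (\<lambda>j k. x (Alpha_idx j k)), beta = (\<lambda>j t. x (Beta_idx j t)),
                  gamma = (\<lambda>j i. x (Gamma_idx j i)), theta = (\<lambda>j. x (Theta_idx j))\<rparr>"

lemma of_coords_simps [simp]:
  "alpha (of_coords x) j k = x (Alpha_idx j k)" "beta (of_coords x) j t = x (Beta_idx j t)"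
  "gamma (of_coords x) j i = x (Gamma_idx j i)" "theta (of_coords x) j = x (Theta_idx j)"
  by (simp_all add: of_coords_def)

lemma of_coords_coords [simp]: "of_coords (coords p) = p"
  by (simp add: of_coords_def)

lemma coords_of_coords [simp]: "coords (of_coords x) = x"
proof
  show "coords (of_coords x) v = x v" for v by (cases v) simp_all
qed

lemma coords_inject: "coords p = coords q \<longleftrightarrow> p = q"
  by (metis of_coords_coords)

lemma coords_pcomb: "coords (pcomb l p q) v = l * coords p v + (1 - l) * coords q v"
  by (cases v) (simp_all add: pcomb_def)

lemma all_coord: "(\<forall>v. Q v) \<longleftrightarrow>
    (\<forall>j k. Q (Alpha_idx j k)) \<and> (\<forall>j t. Q (Beta_idx j t)) \<and> (\<forall>j i. Q (Gamma_idx j i)) \<and> (\<forall>j. Q (Theta_idx j))"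
  by (metis coord.exhaust)

datatype constraint = Phi_row nat nat | Psi_row nat

locale pi_polyhedron =
  fixes m n \<kappa> \<tau> :: nat
    and A :: "nat \<Rightarrow> nat \<Rightarrow> nat \<Rightarrow> real" and b :: "nat \<Rightarrow> nat \<Rightarrow> real"
    and c :: "nat \<Rightarrow> nat \<Rightarrow> real" and d :: "nat \<Rightarrow> real"
    and E :: "nat \<Rightarrow> nat \<Rightarrow> real" and f :: "nat \<Rightarrow> real"
begin

abbreviation C :: "pivec set" where
  "C \<equiv> Cset m n \<kappa> \<tau> A b c d E f"

fun valid_coord :: "coord \<Rightarrow> bool" where
  "valid_coord (Alpha_idx j k) \<longleftrightarrow> j \<le> m \<and> k \<in> {1..\<kappa>}"
| "valid_coord (Beta_idx j t) \<longleftrightarrow> j \<le> m \<and> t \<in> {1..\<tau>}"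
| "valid_coord (Gamma_idx j i) \<longleftrightarrow> j \<le> m \<and> i \<in> {1..n}"
| "valid_coord (Theta_idx j) \<longleftrightarrow> j \<le> m"

definition constraints :: "constraint set" where
  "constraints = (\<lambda>(i, j). Phi_row i j) ` ({1..n} \<times> {1..m}) \<union> Psi_row ` {1..m}"

fun residual :: "constraint \<Rightarrow> (coord \<Rightarrow> real) \<Rightarrow> real" where
  "residual (Phi_row i j) x = Phi \<kappa> \<tau> A b E i j (of_coords x) + x (Gamma_idx j i) - x (Gamma_idx 0 i)"
| "residual (Psi_row j) x = Psi \<kappa> \<tau> c d f j (of_coords x) + x (Theta_idx j) - x (Theta_idx 0)"

lemma finite_valid_coords: "finite {v. valid_coord v}"
proof -
  have "{v. valid_coord v} \<subseteq> (\<lambda>(j, k). Alpha_idx j k) ` ({..m} \<times> {1..\<kappa>})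
      \<union> (\<lambda>(j, t). Beta_idx j t) ` ({..m} \<times> {1..\<tau>}) \<union> (\<lambda>(j, i). Gamma_idx j i) ` ({..m} \<times> {1..n})
      \<union> Theta_idx ` {..m}"
    by (auto elim!: valid_coord.elims)
  then show ?thesis by (rule finite_subset) auto
qed

lemma finite_constraints: "finite constraints"
  by (simp add: constraints_def)

lemma card_constraints: "card constraints = n * m + m"
  unfolding constraints_def
  by (subst card_Un_disjoint) (auto simp: card_image inj_on_def card_cartesian_product)

lemma ball_constraints:
  "(\<forall>r\<in>constraints. Q r) \<longleftrightarrow> (\<forall>i\<in>{1..n}. \<forall>j\<in>{1..m}. Q (Phi_row i j)) \<and> (\<forall>j\<in>{1..m}. Q (Psi_row j))"
  by (auto simp: constraints_def)

lemma Phi_of_coords_lincomb: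
  "Phi \<kappa> \<tau> A b E i j (of_coords (\<lambda>v. a * x v + e * y v))
     = a * Phi \<kappa> \<tau> A b E i j (of_coords x) + e * Phi \<kappa> \<tau> A b E i j (of_coords y)"
  by (simp add: Phi_def sum_distrib_left algebra_simps flip: sum.distrib)

lemma Psi_of_coords_lincomb:
  "Psi \<kappa> \<tau> c d f j (of_coords (\<lambda>v. a * x v + e * y v))
     = a * Psi \<kappa> \<tau> c d f j (of_coords x) + e * Psi \<kappa> \<tau> c d f j (of_coords y)"
  by (simp add: Psi_def sum_distrib_left algebra_simps flip: sum.distrib)

lemma linear_form_residual: "linear_form (residual r)"
  unfolding linear_form_def
  by (cases r) (simp_all add: Phi_of_coords_lincomb Psi_of_coords_lincomb algebra_simps)

lemma Cset_iff_coords: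
  "p \<in> C \<longleftrightarrow> (\<forall>v. \<not> valid_coord v \<longrightarrow> coords p v = 0) \<and> (\<forall>v. valid_coord v \<longrightarrow> 0 \<le> coords p v)
     \<and> (\<forall>r\<in>constraints. residual r (coords p) = 0)"
  unfolding Cset_def pi_wf_def ball_constraints all_coord by (auto simp: algebra_simps)

lemma Cset_gamma_nonneg: "p \<in> C \<Longrightarrow> j \<le> m \<Longrightarrow> i \<in> {1..n} \<Longrightarrow> 0 \<le> gamma p j i"
  by (simp add: Cset_def)

lemma Cset_theta_nonneg: "p \<in> C \<Longrightarrow> j \<le> m \<Longrightarrow> 0 \<le> theta p j"
  by (simp add: Cset_def)

lemma Cset_gamma_eq:
  "p \<in> C \<Longrightarrow> i \<in> {1..n} \<Longrightarrow> j \<in> {1..m} \<Longrightarrow> gamma p j i = gamma p 0 i - Phi \<kappa> \<tau> A b E i j p"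
  by (simp add: Cset_def algebra_simps)

lemma Cset_theta_eq:
  "p \<in> C \<Longrightarrow> j \<in> {1..m} \<Longrightarrow> theta p j = theta p 0 - Psi \<kappa> \<tau> c d f j p"
  by (simp add: Cset_def algebra_simps)

lemma card_gamma_nonzero_add_card_tight:
  assumes "p \<in> C"
  shows "(\<Sum>i=1..n. int (card {j\<in>{0..m}. gamma p j i \<noteq> 0}))
      + int (card (SIGMA i:{1..n}. {j\<in>{1..m}. gamma p 0 i = 0 \<and> Phi \<kappa> \<tau> A b E i j p = 0}))
    = int n * int m + (\<Sum>i=1..n. ind (gamma p 0 i))
      - (\<Sum>i=1..n. \<Sum>j=1..m. ind (gamma p 0 i) * (1 - ind (gamma p j i)))"
proof -
  have row: "int (card {j\<in>{0..m}. gamma p j i \<noteq> 0})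
      + int (card {j\<in>{1..m}. gamma p 0 i = 0 \<and> Phi \<kappa> \<tau> A b E i j p = 0})
      = int m + ind (gamma p 0 i) - (\<Sum>j=1..m. ind (gamma p 0 i) * (1 - ind (gamma p j i)))"
    if "i \<in> {1..n}" for i
    using Cset_gamma_eq[OF assms that] by (intro card_nonzero_add_card_tight) blast
  have "int (card (SIGMA i:{1..n}. {j\<in>{1..m}. gamma p 0 i = 0 \<and> Phi \<kappa> \<tau> A b E i j p = 0}))
      = (\<Sum>i=1..n. int (card {j\<in>{1..m}. gamma p 0 i = 0 \<and> Phi \<kappa> \<tau> A b E i j p = 0}))"
    by (simp add: card_SigmaI)
  then have "(\<Sum>i=1..n. int (card {j\<in>{0..m}. gamma p j i \<noteq> 0}))
      + int (card (SIGMA i:{1..n}. {j\<in>{1..m}. gamma p 0 i = 0 \<and> Phi \<kappa> \<tau> A b E i j p = 0}))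
      = (\<Sum>i=1..n. int (card {j\<in>{0..m}. gamma p j i \<noteq> 0})
          + int (card {j\<in>{1..m}. gamma p 0 i = 0 \<and> Phi \<kappa> \<tau> A b E i j p = 0}))"
    by (simp only: sum.distrib)
  also have "\<dots> = (\<Sum>i=1..n. int m + ind (gamma p 0 i) - (\<Sum>j=1..m. ind (gamma p 0 i) * (1 - ind (gamma p j i))))"
    by (rule sum.cong[OF refl row])
  finally show ?thesis
    by (simp add: sum.distrib sum_subtractf)
qed

lemma residual_indicator_eq_0:
  assumes "\<forall>j k. Alpha_idx j k \<notin> X"
    and "\<forall>j\<in>{1..m}. \<forall>l. (Beta_idx j l \<in> X \<longleftrightarrow> Beta_idx 0 l \<in> X) \<and> (Gamma_idx j l \<in> X \<longleftrightarrow> Gamma_idx 0 l \<in> X)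
      \<and> (Theta_idx j \<in> X \<longleftrightarrow> Theta_idx 0 \<in> X)"
    and "r \<in> constraints"
  shows "residual r (indicator X) = 0"
proof -
  have alpha: "indicator X (Alpha_idx j k) = (0::real)" for j k
    using assms(1) by simp
  have shift: "indicator X (Beta_idx j l) = indicator X (Beta_idx 0 l)"
      "indicator X (Gamma_idx j l) = indicator X (Gamma_idx 0 l)"
      "indicator X (Theta_idx j) = indicator X (Theta_idx 0)" if "j \<in> {1..m}" for j l
    using assms(2) that by (simp_all add: indicator_def)
  from assms(3) show ?thesis
    by (auto simp: constraints_def Phi_def Psi_def alpha shift)
qed

end

locale pi_face = pi_polyhedron +
  fixes jh kh :: nat
begin

definition face :: "pivec set" where
  "face = {p \<in> C. alpha p jh kh = 1}"

definition support :: "pivec \<Rightarrow> coord set" where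
  "support p = {v. valid_coord v \<and> 0 < coords p v} - {Alpha_idx jh kh}"

lemma finite_support: "finite (support p)"
  unfolding support_def using finite_valid_coords by (rule finite_subset[rotated]) auto

lemma perturbation_in_face:
  assumes p: "p \<in> face"
    and x: "\<forall>v. v \<notin> support p \<longrightarrow> x v = 0" "\<forall>r\<in>constraints. residual r x = 0"
    and small: "\<forall>v\<in>support p. \<bar>e * x v\<bar> \<le> coords p v"
  shows "of_coords (\<lambda>v. coords p v + e * x v) \<in> face"
proof -
  let ?y = "\<lambda>v. coords p v + e * x v"
  from p have pC: "p \<in> C" and p1: "alpha p jh kh = 1" by (auto simp: face_def)
  have "?y v = 0" if "\<not> valid_coord v" for v
    using that pC x(1) by (simp add: Cset_iff_coords support_def)
  moreover have "0 \<le> ?y v" if "valid_coord v" for v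
  proof (cases "v \<in> support p")
    case True
    with small have "\<bar>e * x v\<bar> \<le> coords p v" by blast
    then show ?thesis by (simp add: abs_le_iff)
  next
    case False
    with that pC x(1) show ?thesis by (simp add: Cset_iff_coords)
  qed
  moreover have "residual r ?y = 0" if "r \<in> constraints" for r
  proof -
    have "residual r (\<lambda>v. 1 * coords p v + e * x v) = 1 * residual r (coords p) + e * residual r x"
      using linear_form_residual unfolding linear_form_def by blast
    with that pC x(2) show ?thesis by (simp add: Cset_iff_coords)
  qed
  moreover have "?y (Alpha_idx jh kh) = 1"
    using p1 x(1) by (simp add: support_def)
  ultimately show ?thesis
    by (simp add: face_def Cset_iff_coords)
qed

lemma extreme_point_no_feasible_direction:
  assumes ext: "is_extreme p face"
    and x: "\<forall>v. v \<notin> support p \<longrightarrow> x v = 0" "\<forall>r\<in>constraints. residual r x = 0"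
  shows "x v = 0"
proof (rule ccontr)
  assume xv: "x v \<noteq> 0"
  with x(1) have v: "v \<in> support p" by blast
  from ext have p: "p \<in> face" by (simp add: is_extreme_def)
  have pos: "0 < coords p w" if "w \<in> support p" for w
    using that by (simp add: support_def)
  define \<epsilon> where "\<epsilon> = Min ((\<lambda>w. coords p w / (\<bar>x w\<bar> + 1)) ` support p)"
  have "0 < \<epsilon>"
    unfolding \<epsilon>_def using finite_support v pos by (subst Min_gr_iff) auto
  have small: "\<forall>w\<in>support p. \<bar>e * x w\<bar> \<le> coords p w" if "\<bar>e\<bar> = \<epsilon>" for e
  proof
    fix w assume w: "w \<in> support p"
    have "\<epsilon> \<le> coords p w / (\<bar>x w\<bar> + 1)"
      unfolding \<epsilon>_def using finite_support w by (intro Min_le) auto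
    then have "\<epsilon> * (\<bar>x w\<bar> + 1) \<le> coords p w"
      by (simp add: pos_le_divide_eq add_nonneg_pos)
    with that \<open>0 < \<epsilon>\<close> show "\<bar>e * x w\<bar> \<le> coords p w"
      by (simp add: abs_mult algebra_simps)
  qed
  define q where "q e = of_coords (\<lambda>w. coords p w + e * x w)" for e
  have "q \<epsilon> \<in> face" "q (- \<epsilon>) \<in> face"
    unfolding q_def using \<open>0 < \<epsilon>\<close> by (intro perturbation_in_face p x small; simp)+
  moreover have "q \<epsilon> \<noteq> q (- \<epsilon>)"
  proof
    assume "q \<epsilon> = q (- \<epsilon>)"
    then have "coords (q \<epsilon>) v = coords (q (- \<epsilon>)) v" by simp
    with xv \<open>0 < \<epsilon>\<close> show False by (simp add: q_def)
  qed
  moreover have "coords p = coords (pcomb (1/2) (q \<epsilon>) (q (- \<epsilon>)))"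
  proof
    fix w show "coords p w = coords (pcomb (1/2) (q \<epsilon>) (q (- \<epsilon>))) w"
      by (simp add: q_def coords_pcomb algebra_simps)
  qed
  then have "\<exists>l. 0 < l \<and> l < 1 \<and> p = pcomb l (q \<epsilon>) (q (- \<epsilon>))"
    by (intro exI[of _ "1/2"]) (simp add: coords_inject)
  ultimately show False
    using ext unfolding is_extreme_def by blast
qed

lemma card_support_le:
  assumes "is_extreme p face"
  shows "card (support p) \<le> n * m + m"
proof (rule ccontr)
  assume "\<not> ?thesis"
  then have "card constraints < card (support p)" by (simp add: card_constraints)
  then obtain x where x: "\<forall>v. v \<notin> support p \<longrightarrow> x v = 0" "\<exists>v\<in>support p. x v \<noteq> 0"
      "\<forall>r\<in>constraints. residual r x = 0"
    using linear_forms_common_nontrivial_zero[where L = residual, OF finite_constraints finite_support]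
      linear_form_residual by blast
  with extreme_point_no_feasible_direction[OF assms x(1,3)] show False by blast
qed

lemma extreme_point_no_feasible_indicator:
  assumes "is_extreme p face" "X \<subseteq> support p" "X \<noteq> {}"
  shows "\<not> (\<forall>r\<in>constraints. residual r (indicator X) = 0)"
proof
  assume "\<forall>r\<in>constraints. residual r (indicator X) = 0"
  moreover have "\<forall>v. v \<notin> support p \<longrightarrow> indicator X v = (0::real)"
    using assms(2) by (auto simp: indicator_def)
  ultimately have "indicator X v = (0::real)" for v
    using extreme_point_no_feasible_direction[OF assms(1)] by blast
  with assms(3) show False by (auto simp: indicator_def split: if_splits)
qed

lemma extreme_point_beta_disjoint:
  assumes "is_extreme p face"
  shows "(\<Inter>j\<in>{0..m}. {t\<in>{1..\<tau>}. 0 < beta p j t}) = {}"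
proof (rule ccontr)
  assume "\<not> ?thesis"
  then obtain t where "t \<in> (\<Inter>j\<in>{0..m}. {t\<in>{1..\<tau>}. 0 < beta p j t})" by blast
  then have t: "t \<in> {1..\<tau>}" "\<forall>j\<le>m. 0 < beta p j t" by auto
  define X where "X = (\<lambda>j. Beta_idx j t) ` {0..m}"
  have "X \<subseteq> support p" "X \<noteq> {}"
    using t by (auto simp: X_def support_def)
  moreover have "\<forall>r\<in>constraints. residual r (indicator X) = 0"
    by (intro ballI residual_indicator_eq_0) (auto simp: X_def)
  ultimately show False
    using extreme_point_no_feasible_indicator[OF assms] by blast
qed

lemma extreme_point_gamma0_eq_Max:
  assumes ext: "is_extreme p face" and "1 \<le> m" "i \<in> {1..n}"
  shows "gamma p 0 i = Max ((\<lambda>j. pos (Phi \<kappa> \<tau> A b E i j p)) ` {1..m})"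
proof (rule ccontr)
  assume not_Max: "\<not> ?thesis"
  from ext have pC: "p \<in> C" by (simp add: is_extreme_def face_def)
  then have "\<forall>j\<le>m. 0 < gamma p j i"
    using slack_eq_Max_pos_or_all_pos[of m "\<lambda>j. gamma p j i" "\<lambda>j. Phi \<kappa> \<tau> A b E i j p"]
      not_Max assms(2,3) Cset_gamma_nonneg Cset_gamma_eq by blast
  define X where "X = (\<lambda>j. Gamma_idx j i) ` {0..m}"
  have "X \<subseteq> support p" "X \<noteq> {}"
    using \<open>\<forall>j\<le>m. 0 < gamma p j i\<close> assms(3) by (auto simp: X_def support_def)
  moreover have "\<forall>r\<in>constraints. residual r (indicator X) = 0"
    by (intro ballI residual_indicator_eq_0) (auto simp: X_def)
  ultimately show False
    using extreme_point_no_feasible_indicator[OF ext] by blast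
qed

lemma extreme_point_theta0_eq_Max:
  assumes ext: "is_extreme p face" and "1 \<le> m"
  shows "theta p 0 = Max ((\<lambda>j. pos (Psi \<kappa> \<tau> c d f j p)) ` {1..m})"
proof (rule ccontr)
  assume not_Max: "\<not> ?thesis"
  from ext have pC: "p \<in> C" by (simp add: is_extreme_def face_def)
  then have "\<forall>j\<le>m. 0 < theta p j"
    using slack_eq_Max_pos_or_all_pos[of m "theta p" "\<lambda>j. Psi \<kappa> \<tau> c d f j p"]
      not_Max assms(2) Cset_theta_nonneg Cset_theta_eq by blast
  define X where "X = Theta_idx ` {0..m}"
  have "X \<subseteq> support p" "X \<noteq> {}"
    using \<open>\<forall>j\<le>m. 0 < theta p j\<close> by (auto simp: X_def support_def)
  moreover have "\<forall>r\<in>constraints. residual r (indicator X) = 0"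
    by (intro ballI residual_indicator_eq_0) (auto simp: X_def)
  ultimately show False
    using extreme_point_no_feasible_indicator[OF ext] by blast
qed

definition Kset :: "pivec \<Rightarrow> nat \<Rightarrow> nat set" where
  "Kset p j = (if j = jh then {k\<in>{1..\<kappa>}. 0 < alpha p j k} - {kh} else {k\<in>{1..\<kappa>}. 0 < alpha p j k})"

definition Tset :: "pivec \<Rightarrow> nat \<Rightarrow> nat set" where
  "Tset p j = {t\<in>{1..\<tau>}. 0 < beta p j t}"

lemma support_eq:
  assumes "p \<in> C"
  shows "support p = (\<lambda>(j, k). Alpha_idx j k) ` (SIGMA j:{0..m}. Kset p j)
    \<union> (\<lambda>(j, t). Beta_idx j t) ` (SIGMA j:{0..m}. Tset p j)
    \<union> (\<lambda>(i, j). Gamma_idx j i) ` (SIGMA i:{1..n}. {j\<in>{0..m}. gamma p j i \<noteq> 0})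
    \<union> Theta_idx ` {j\<in>{0..m}. theta p j \<noteq> 0}" (is "_ = ?rhs")
proof (rule set_eqI)
  fix v
  show "v \<in> support p \<longleftrightarrow> v \<in> ?rhs"
  proof (cases v)
    case (Alpha_idx j k)
    then show ?thesis by (simp add: support_def Kset_def image_iff)
  next
    case (Beta_idx j t)
    then show ?thesis by (simp add: support_def Tset_def image_iff)
  next
    case (Gamma_idx j i)
    with Cset_gamma_nonneg[OF assms, of j i] show ?thesis by (auto simp: support_def image_iff)
  next
    case (Theta_idx j)
    with Cset_theta_nonneg[OF assms, of j] show ?thesis by (auto simp: support_def image_iff)
  qed
qed

lemma card_support_eq:
  assumes "p \<in> C"
  shows "card (support p) = (\<Sum>j=0..m. card (Kset p j) + card (Tset p j))
    + (\<Sum>i=1..n. card {j\<in>{0..m}. gamma p j i \<noteq> 0}) + card {j\<in>{0..m}. theta p j \<noteq> 0}"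
proof -
  define SA where "SA = (\<lambda>(j, k). Alpha_idx j k) ` (SIGMA j:{0..m}. Kset p j)"
  define SB where "SB = (\<lambda>(j, t). Beta_idx j t) ` (SIGMA j:{0..m}. Tset p j)"
  define SG where "SG = (\<lambda>(i, j). Gamma_idx j i) ` (SIGMA i:{1..n}. {j\<in>{0..m}. gamma p j i \<noteq> 0})"
  define ST where "ST = Theta_idx ` {j\<in>{0..m}. theta p j \<noteq> 0}"
  have fin: "finite (Kset p j)" "finite (Tset p j)" for j
    by (simp_all add: Kset_def Tset_def)
  have "card SA = (\<Sum>j=0..m. card (Kset p j))"
    unfolding SA_def by (subst card_image) (auto simp: inj_on_def card_SigmaI fin)
  moreover have "card SB = (\<Sum>j=0..m. card (Tset p j))"
    unfolding SB_def by (subst card_image) (auto simp: inj_on_def card_SigmaI fin)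
  moreover have "card SG = (\<Sum>i=1..n. card {j\<in>{0..m}. gamma p j i \<noteq> 0})"
    unfolding SG_def by (subst card_image) (auto simp: inj_on_def card_SigmaI)
  moreover have "card ST = card {j\<in>{0..m}. theta p j \<noteq> 0}"
    unfolding ST_def by (subst card_image) (auto simp: inj_on_def)
  moreover have "finite SA" "finite SB" "finite SG" "finite ST"
    by (simp_all add: SA_def SB_def SG_def ST_def fin)
  moreover have "SA \<inter> SB = {}" "(SA \<union> SB) \<inter> SG = {}" "(SA \<union> SB \<union> SG) \<inter> ST = {}"
    by (auto simp: SA_def SB_def SG_def ST_def)
  ultimately show ?thesis
    unfolding support_eq[OF assms] SA_def[symmetric] SB_def[symmetric] SG_def[symmetric] ST_def[symmetric]
    by (simp add: card_Un_disjoint sum.distrib)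
qed

lemma extreme_point_tight_count:
  assumes ext: "is_extreme p face"
  shows "\<exists>U1 U2. U1 \<subseteq> {(i, j). i \<in> {1..n} \<and> j \<in> {1..m} \<and> Phi \<kappa> \<tau> A b E i j p = 0}
    \<and> U2 \<subseteq> {j \<in> {1..m}. Psi \<kappa> \<tau> c d f j p = 0}
    \<and> int (card U1) + int (card U2) \<ge>
        (\<Sum>j=0..m. int (card (Kset p j)) + int (card (Tset p j)))
        + (\<Sum>i=1..n. ind (gamma p 0 i))
        - (\<Sum>i=1..n. \<Sum>j=1..m. ind (gamma p 0 i) * (1 - ind (gamma p j i)))
        + ind (theta p 0)
        - (\<Sum>j=1..m. ind (theta p 0) * (1 - ind (theta p j)))"
proof -
  from ext have pC: "p \<in> C" by (simp add: is_extreme_def face_def)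
  define U1 where "U1 = (SIGMA i:{1..n}. {j\<in>{1..m}. gamma p 0 i = 0 \<and> Phi \<kappa> \<tau> A b E i j p = 0})"
  define U2 where "U2 = {j\<in>{1..m}. theta p 0 = 0 \<and> Psi \<kappa> \<tau> c d f j p = 0}"
  have gamma_total: "(\<Sum>i=1..n. int (card {j\<in>{0..m}. gamma p j i \<noteq> 0})) + int (card U1)
      = int n * int m + (\<Sum>i=1..n. ind (gamma p 0 i))
        - (\<Sum>i=1..n. \<Sum>j=1..m. ind (gamma p 0 i) * (1 - ind (gamma p j i)))"
    unfolding U1_def by (rule card_gamma_nonzero_add_card_tight[OF pC])
  have theta_row: "int (card {j\<in>{0..m}. theta p j \<noteq> 0}) + int (card U2)
      = int m + ind (theta p 0) - (\<Sum>j=1..m. ind (theta p 0) * (1 - ind (theta p j)))"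
    unfolding U2_def using Cset_theta_eq[OF pC] by (intro card_nonzero_add_card_tight) blast
  have "int (card (support p)) \<le> int n * int m + int m"
    using card_support_le[OF ext] by (simp flip: of_nat_mult of_nat_add)
  then have "(\<Sum>j=0..m. int (card (Kset p j)) + int (card (Tset p j)))
      + (\<Sum>i=1..n. int (card {j\<in>{0..m}. gamma p j i \<noteq> 0})) + int (card {j\<in>{0..m}. theta p j \<noteq> 0})
      \<le> int n * int m + int m"
    by (simp add: card_support_eq[OF pC])
  with gamma_total theta_row show ?thesis
    by (intro exI[of _ U1] exI[of _ U2]) (auto simp: U1_def U2_def)
qed

lemma face_memberI:
  assumes "1 \<le> m" "pi_wf m n \<kappa> \<tau> p"
    and "\<forall>j\<le>m. (\<forall>k\<in>{1..\<kappa>}. 0 \<le> alpha p j k) \<and> (\<forall>t\<in>{1..\<tau>}. 0 \<le> beta p j t)"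
    and "alpha p jh kh = 1"
    and gamma: "\<forall>i\<in>{1..n}. gamma p 0 i = Max ((\<lambda>j. pos (Phi \<kappa> \<tau> A b E i j p)) ` {1..m})
      \<and> (\<forall>j\<in>{1..m}. gamma p j i = gamma p 0 i - Phi \<kappa> \<tau> A b E i j p)"
    and theta: "theta p 0 = Max ((\<lambda>j. pos (Psi \<kappa> \<tau> c d f j p)) ` {1..m})"
      "\<forall>j\<in>{1..m}. theta p j = theta p 0 - Psi \<kappa> \<tau> c d f j p"
  shows "p \<in> face"
proof -
  have "0 \<le> gamma p j i" if "j \<le> m" "i \<in> {1..n}" for j i
    using gamma that
    by (intro nonneg_if_eq_Max_pos[OF assms(1), of "\<lambda>j. gamma p j i" "\<lambda>j. Phi \<kappa> \<tau> A b E i j p"]) auto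
  moreover have "0 \<le> theta p j" if "j \<le> m" for j
    using theta that
    by (intro nonneg_if_eq_Max_pos[OF assms(1), of "theta p" "\<lambda>j. Psi \<kappa> \<tau> c d f j p"]) auto
  ultimately show ?thesis
    using assms unfolding face_def Cset_def by auto
qed

end

theorem mainTheorem5:
  fixes m n \<kappa> \<tau> :: nat
    and A :: "nat \<Rightarrow> nat \<Rightarrow> nat \<Rightarrow> real" and b :: "nat \<Rightarrow> nat \<Rightarrow> real"
    and c :: "nat \<Rightarrow> nat \<Rightarrow> real" and d :: "nat \<Rightarrow> real"
    and E :: "nat \<Rightarrow> nat \<Rightarrow> real" and f :: "nat \<Rightarrow> real"
    and kh jh :: nat
  assumes hm: "1 \<le> m"
    and hk: "kh \<in> {1..\<kappa>}"
    and hj: "jh \<le> m"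
  defines "Ck \<equiv> {p \<in> Cset m n \<kappa> \<tau> A b c d E f. alpha p jh kh = 1}"
  shows
   "(\<forall>pb. is_extreme pb Ck \<longrightarrow>
      (let Kset = (\<lambda>j. if j = jh then {k\<in>{1..\<kappa>}. alpha pb j k > 0} - {kh}
                        else {k\<in>{1..\<kappa>}. alpha pb j k > 0});
           Tset = (\<lambda>j. {t\<in>{1..\<tau>}. beta pb j t > 0});
           Ph = (\<lambda>i j. Phi \<kappa> \<tau> A b E i j pb);
           Ps = (\<lambda>j. Psi \<kappa> \<tau> c d f j pb)
       in (\<Inter>j\<in>{0..m}. Tset j) = {}
        \<and> (\<forall>i\<in>{1..n}. gamma pb 0 i = Max ((\<lambda>j. pos (Ph i j)) ` {1..m})
              \<and> (\<forall>j\<in>{1..m}. gamma pb j i = gamma pb 0 i - Ph i j))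
        \<and> theta pb 0 = Max ((\<lambda>j. pos (Ps j)) ` {1..m})
        \<and> (\<forall>j\<in>{1..m}. theta pb j = theta pb 0 - Ps j)
        \<and> (\<exists>U1 U2. U1 \<subseteq> {(i, j). i \<in> {1..n} \<and> j \<in> {1..m} \<and> Ph i j = 0}
              \<and> U2 \<subseteq> {j \<in> {1..m}. Ps j = 0}
              \<and> int (card U1) + int (card U2) \<ge>
                  (\<Sum>j=0..m. int (card (Kset j)) + int (card (Tset j)))
                  + (\<Sum>i=1..n. ind (gamma pb 0 i))
                  - (\<Sum>i=1..n. \<Sum>j=1..m. ind (gamma pb 0 i) * (1 - ind (gamma pb j i)))
                  + ind (theta pb 0)
                  - (\<Sum>j=1..m. ind (theta pb 0) * (1 - ind (theta pb j))))))
    \<and> (\<forall>pb. pi_wf m n \<kappa> \<tau> pb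
           \<and> (\<forall>j\<le>m. (\<forall>k\<in>{1..\<kappa>}. 0 \<le> alpha pb j k) \<and> (\<forall>t\<in>{1..\<tau>}. 0 \<le> beta pb j t))
           \<and> alpha pb jh kh = 1
           \<and> (\<forall>i\<in>{1..n}. gamma pb 0 i = Max ((\<lambda>j. pos (Phi \<kappa> \<tau> A b E i j pb)) ` {1..m})
                 \<and> (\<forall>j\<in>{1..m}. gamma pb j i = gamma pb 0 i - Phi \<kappa> \<tau> A b E i j pb))
           \<and> theta pb 0 = Max ((\<lambda>j. pos (Psi \<kappa> \<tau> c d f j pb)) ` {1..m})
           \<and> (\<forall>j\<in>{1..m}. theta pb j = theta pb 0 - Psi \<kappa> \<tau> c d f j pb)
         \<longrightarrow> pb \<in> Ck)"
proof -
  interpret pi_face m n \<kappa> \<tau> A b c d E f jh kh .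
  have Ck_face: "Ck = face" by (simp add: Ck_def face_def)
  show ?thesis
  proof (intro conjI allI impI, goal_cases)
    case (1 pb)
    then have ext: "is_extreme pb face" by (simp add: Ck_face)
    then have pC: "pb \<in> C" by (simp add: is_extreme_def face_def)
    show ?case
      unfolding Let_def
      using extreme_point_beta_disjoint[OF ext] extreme_point_gamma0_eq_Max[OF ext hm]
        Cset_gamma_eq[OF pC] extreme_point_theta0_eq_Max[OF ext hm] Cset_theta_eq[OF pC]
        extreme_point_tight_count[OF ext, unfolded Kset_def Tset_def]
      by simp
  next
    case (2 pb)
    then show ?case
      unfolding Ck_face using face_memberI[OF hm] by blast
  qed
qed

end
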